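(* Let $G$ be a multiplicative monoid with identity, let $N$ be a $G$-graded near-ring, let $A$ be a totally ordered set and let $(P_a)_{a\in A}$ be a family of graded weakly prime ideals of $N$ such that $P_a\subseteq P_b$ whenever $a\le b$. Then $P=\bigcap_{a\in A}P_a$ is a graded weakly prime ideal of $N$.
   Context: A near-ring $(N,+,\cdot)$ is a set with two binary operations such that $(N,+)$ is a group (not necessarily abelian), $(N,\cdot)$ is a semigroup, and $(a+b)y = ay+by$ for all $a,b,y\in N$. For a multiplicative monoid $G$ with identity, $N$ is a $G$-graded near-ring if there is a family $\{N_\sigma\}_{\sigma\in G}$ of additive normal subgroups of $N$ with $N=\bigoplus_{\sigma\in G}N_\sigma$ and $N_\sigma N_\tau\subseteq N_{\sigma\tau}$. An ideal $P$ is graded if $P=\bigoplus_{\sigma}(P\cap N_\sigma)$. For ideals $I,J$, $IJ$ denotes their product. A graded ideal $P$ is graded weakly prime if for all graded ideals $I,J$ with $\{0\}\neq IJ\subseteq P$, either $I\subseteq P$ or $J\subseteq P$. *)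

theory Defs
  imports Main
begin

text \<open>A near-ring is modelled on a type whose addition is a (not necessarily
abelian) group (class group_add), whose multiplication is a semigroup
(class semigroup_mult), and which satisfies right distributivity.\<close>

definition near_ring :: "'n::{group_add, semigroup_mult} itself \<Rightarrow> bool" where
  "near_ring _ \<longleftrightarrow> (\<forall>a b y :: 'n. (a + b) * y = a * y + b * y)"

definition add_subgroup :: "'n::group_add set \<Rightarrow> bool" where
  "add_subgroup H \<longleftrightarrow> 0 \<in> H \<and> (\<forall>x\<in>H. \<forall>y\<in>H. x + y \<in> H) \<and> (\<forall>x\<in>H. - x \<in> H)"

definition normal_add_subgroup :: "'n::group_add set \<Rightarrow> bool" where
  "normal_add_subgroup H \<longleftrightarrow> add_subgroup H \<and> (\<forall>n. \<forall>h\<in>H. n + h - n \<in> H)"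

inductive_set gen_add :: "'n::group_add set \<Rightarrow> 'n set" for S where
  gen_base: "x \<in> S \<Longrightarrow> x \<in> gen_add S"
| gen_zero: "0 \<in> gen_add S"
| gen_plus: "x \<in> gen_add S \<Longrightarrow> y \<in> gen_add S \<Longrightarrow> x + y \<in> gen_add S"
| gen_uminus: "x \<in> gen_add S \<Longrightarrow> - x \<in> gen_add S"

definition internal_direct_sum :: "('g \<Rightarrow> 'n::group_add set) \<Rightarrow> bool" where
  "internal_direct_sum Ns \<longleftrightarrow>
     (\<forall>s. normal_add_subgroup (Ns s)) \<and>
     gen_add (\<Union>s. Ns s) = UNIV \<and>
     (\<forall>s. Ns s \<inter> gen_add (\<Union>t\<in>-{s}. Ns t) = {0})"

definition graded_near_ring ::
  "('g::monoid_mult \<Rightarrow> 'n::{group_add, semigroup_mult} set) \<Rightarrow> bool" where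
  "graded_near_ring Ns \<longleftrightarrow> near_ring TYPE('n) \<and> internal_direct_sum Ns \<and>
     (\<forall>s t. \<forall>x\<in>Ns s. \<forall>y\<in>Ns t. x * y \<in> Ns (s * t))"

text \<open>Ideal of a near-ring (Pilz): a normal subgroup I of (N,+) with
IN \<subseteq> I and n(n'+i) - nn' \<in> I.\<close>
definition nr_ideal :: "'n::{group_add, semigroup_mult} set \<Rightarrow> bool" where
  "nr_ideal I \<longleftrightarrow> normal_add_subgroup I \<and>
     (\<forall>i\<in>I. \<forall>n. i * n \<in> I) \<and>
     (\<forall>n n'. \<forall>i\<in>I. n * (n' + i) - n * n' \<in> I)"

definition graded_ideal ::
  "('g \<Rightarrow> 'n::{group_add, semigroup_mult} set) \<Rightarrow> 'n set \<Rightarrow> bool" where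
  "graded_ideal Ns P \<longleftrightarrow> nr_ideal P \<and> P = gen_add (\<Union>s. P \<inter> Ns s)"

definition ideal_prod :: "'n::semigroup_mult set \<Rightarrow> 'n set \<Rightarrow> 'n set" where
  "ideal_prod I J = {i * j | i j. i \<in> I \<and> j \<in> J}"

definition graded_weakly_prime ::
  "('g \<Rightarrow> 'n::{group_add, semigroup_mult} set) \<Rightarrow> 'n set \<Rightarrow> bool" where
  "graded_weakly_prime Ns P \<longleftrightarrow> graded_ideal Ns P \<and>
     (\<forall>I J. graded_ideal Ns I \<longrightarrow> graded_ideal Ns J \<longrightarrow>
        ideal_prod I J \<noteq> {0} \<longrightarrow> ideal_prod I J \<subseteq> P \<longrightarrow> I \<subseteq> P \<or> J \<subseteq> P)"

end

theory Submission
  imports Defs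
begin

text \<open>Every element x of a near-ring graded by an internal direct sum has, for each
grade s, a unique homogeneous component q with x = q + r, where r lies in the
subgroup generated by the other grades. A subgroup generated by its homogeneous
elements contains all homogeneous components of its elements, and conversely a
subgroup closed under taking components is generated by its homogeneous elements
(split off one component at a time from a finite decomposition). Hence an
intersection of graded ideals is graded. Weak primeness passes to the
intersection of a chain: if I and J escaped the intersection, they would escape
the smaller of the two witnessing members of the chain, contradicting its weak
primeness.\<close>

lemma add_subgroup_gen_add: "add_subgroup (gen_add S)"
  unfolding add_subgroup_def by (auto intro: gen_add.intros)

lemma add_subgroup_Int: "add_subgroup H \<Longrightarrow> add_subgroup K \<Longrightarrow> add_subgroup (H \<inter> K)"
  unfolding add_subgroup_def by blast

lemma gen_add_mono: "S \<subseteq> T \<Longrightarrow> gen_add S \<subseteq> gen_add T"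
proof
  fix x assume "S \<subseteq> T" and "x \<in> gen_add S"
  from this(2,1) show "x \<in> gen_add T"
    by (induction x rule: gen_add.induct) (auto intro: gen_add.intros)
qed

lemma gen_add_least: "add_subgroup H \<Longrightarrow> S \<subseteq> H \<Longrightarrow> gen_add S \<subseteq> H"
proof
  fix x assume "add_subgroup H" "S \<subseteq> H" and "x \<in> gen_add S"
  from this(3,1,2) show "x \<in> H"
    by (induction x rule: gen_add.induct) (auto simp: add_subgroup_def)
qed

lemma gen_add_empty: "gen_add {} = {0}"
proof -
  have "x = 0" if "x \<in> gen_add {}" for x :: 'a
    using that by (induction x rule: gen_add.induct) auto
  then show ?thesis by (auto intro: gen_add.gen_zero)
qed

lemma gen_add_UN_finite_subfamily:
  assumes "x \<in> gen_add (\<Union>s. H s)"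
  obtains S where "finite S" "x \<in> gen_add (\<Union>s\<in>S. H s)"
proof -
  from assms have "\<exists>S. finite S \<and> x \<in> gen_add (\<Union>s\<in>S. H s)"
  proof (induction x rule: gen_add.induct)
    case (gen_base x)
    then obtain s where "x \<in> H s" by blast
    then show ?case by (intro exI[of _ "{s}"]) (auto intro: gen_add.gen_base)
  next
    case gen_zero
    then show ?case by (auto intro: gen_add.gen_zero)
  next
    case (gen_plus x y)
    then obtain S1 S2 where "finite S1" "x \<in> gen_add (\<Union>s\<in>S1. H s)"
      and "finite S2" "y \<in> gen_add (\<Union>s\<in>S2. H s)" by blast
    moreover have "gen_add (\<Union>s\<in>S1. H s) \<subseteq> gen_add (\<Union>s\<in>S1 \<union> S2. H s)"
      and "gen_add (\<Union>s\<in>S2. H s) \<subseteq> gen_add (\<Union>s\<in>S1 \<union> S2. H s)"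
      by (auto intro!: gen_add_mono)
    ultimately show ?case
      by (intro exI[of _ "S1 \<union> S2"]) (auto intro: gen_add.gen_plus)
  next
    case (gen_uminus x)
    then show ?case by (auto intro: gen_add.gen_uminus)
  qed
  with that show ?thesis by blast
qed

lemma gen_add_conj_closed:
  assumes "\<And>r. r \<in> S \<Longrightarrow> q + r - q \<in> S"
    and "r \<in> gen_add S"
  shows "q + r - q \<in> gen_add S"
  using assms(2)
proof (induction r rule: gen_add.induct)
  case (gen_base x)
  then show ?case using assms(1) by (auto intro: gen_add.gen_base)
next
  case gen_zero
  then show ?case by (auto intro: gen_add.gen_zero)
next
  case (gen_plus x y)
  have "q + (x + y) - q = (q + x - q) + (q + y - q)"
    by (simp only: diff_conv_add_uminus add.assoc minus_add_cancel)
  then show ?case using gen_plus.IH by (metis gen_add.gen_plus)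
next
  case (gen_uminus x)
  have "q + - x - q = - (q + x - q)"
    by (simp only: diff_conv_add_uminus add.assoc minus_add minus_minus)
  then show ?case using gen_uminus.IH by (metis gen_add.gen_uminus)
qed

text \<open>The subgroup H s normalises every H t, so in a product of generators the
H s factors can be moved to the front.\<close>

lemma gen_add_UN_split:
  assumes sub: "add_subgroup (H s)"
    and normalises: "\<And>q t r. q \<in> H s \<Longrightarrow> r \<in> H t \<Longrightarrow> q + r - q \<in> H t"
    and "x \<in> gen_add (\<Union>t\<in>T. H t)"
  shows "\<exists>q\<in>H s. - q + x \<in> gen_add (\<Union>t\<in>T - {s}. H t)"
  using assms(3)
proof (induction x rule: gen_add.induct)
  case (gen_base x)
  then obtain t where t: "t \<in> T" "x \<in> H t" by blast
  show ?case
  proof (cases "t = s")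
    case True
    then show ?thesis using t by (auto intro!: bexI[of _ x] gen_add.gen_zero)
  next
    case False
    then show ?thesis using t sub unfolding add_subgroup_def
      by (auto intro!: bexI[of _ 0] gen_add.gen_base)
  qed
next
  case gen_zero
  then show ?case using sub unfolding add_subgroup_def
    by (auto intro!: bexI[of _ 0] gen_add.intros)
next
  case (gen_plus x y)
  then obtain q1 q2 where q: "q1 \<in> H s" "- q1 + x \<in> gen_add (\<Union>t\<in>T - {s}. H t)"
    "q2 \<in> H s" "- q2 + y \<in> gen_add (\<Union>t\<in>T - {s}. H t)" by blast
  have "- q2 \<in> H s" using q(3) sub unfolding add_subgroup_def by blast
  have "- q2 + (- q1 + x) - - q2 \<in> gen_add (\<Union>t\<in>T - {s}. H t)"
    by (rule gen_add_conj_closed[OF _ q(2)]) (use \<open>- q2 \<in> H s\<close> normalises in blast)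
  moreover have "- (q1 + q2) + (x + y) = (- q2 + (- q1 + x) - - q2) + (- q2 + y)"
    by (simp only: diff_conv_add_uminus add.assoc minus_add minus_minus add_minus_cancel)
  moreover have "q1 + q2 \<in> H s" using q sub unfolding add_subgroup_def by blast
  ultimately show ?case using q(4) by (metis gen_add.gen_plus)
next
  case (gen_uminus x)
  then obtain q where q: "q \<in> H s" "- q + x \<in> gen_add (\<Union>t\<in>T - {s}. H t)" by blast
  have "q + - (- q + x) - q \<in> gen_add (\<Union>t\<in>T - {s}. H t)"
    by (rule gen_add_conj_closed[OF _ gen_add.gen_uminus[OF q(2)]]) (use q(1) normalises in blast)
  moreover have "- (- q) + - x = q + - (- q + x) - q"
    by (simp only: diff_conv_add_uminus add.assoc minus_add minus_minus add_minus_cancel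
        minus_add_cancel right_minus add_0_right)
  moreover have "- q \<in> H s" using q(1) sub unfolding add_subgroup_def by blast
  ultimately show ?case by metis
qed

lemma internal_direct_sumD:
  assumes "internal_direct_sum Ns"
  shows "add_subgroup (Ns s)"
    and "h \<in> Ns s \<Longrightarrow> n + h - n \<in> Ns s"
    and "gen_add (\<Union>s. Ns s) = UNIV"
    and "Ns s \<inter> gen_add (\<Union>t\<in>-{s}. Ns t) = {0}"
  using assms unfolding internal_direct_sum_def normal_add_subgroup_def by blast+

text \<open>Since addition need not be commutative, the component q of x is split off on
the left: x = q + (- q + x).\<close>

definition homogeneous_component :: "('g \<Rightarrow> 'n::group_add set) \<Rightarrow> 'g \<Rightarrow> 'n \<Rightarrow> 'n" where
  "homogeneous_component Ns s x =
     (THE q. q \<in> Ns s \<and> - q + x \<in> gen_add (\<Union>t\<in>-{s}. Ns t))"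

lemma homogeneous_component_unique:
  assumes ids: "internal_direct_sum Ns"
    and "q1 \<in> Ns s" "- q1 + x \<in> gen_add (\<Union>t\<in>-{s}. Ns t)"
    and "q2 \<in> Ns s" "- q2 + x \<in> gen_add (\<Union>t\<in>-{s}. Ns t)"
  shows "q1 = q2"
proof -
  have "- q1 + q2 = (- q1 + x) + - (- q2 + x)"
    by (simp only: diff_conv_add_uminus add.assoc minus_add minus_minus add_minus_cancel)
  also have "\<dots> \<in> gen_add (\<Union>t\<in>-{s}. Ns t)"
    using assms(3,5) by (rule gen_add.gen_plus[OF _ gen_add.gen_uminus])
  finally have "- q1 + q2 \<in> Ns s \<inter> gen_add (\<Union>t\<in>-{s}. Ns t)"
    using assms(2,4) internal_direct_sumD(1)[OF ids] unfolding add_subgroup_def by blast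
  then have "- q1 + q2 = 0" using internal_direct_sumD(4)[OF ids] by blast
  then show ?thesis by (metis add_minus_cancel add.right_neutral)
qed

lemma homogeneous_component:
  assumes ids: "internal_direct_sum Ns"
  shows "homogeneous_component Ns s x \<in> Ns s"
    and "- homogeneous_component Ns s x + x \<in> gen_add (\<Union>t\<in>-{s}. Ns t)"
proof -
  have "x \<in> gen_add (\<Union>t\<in>UNIV. Ns t)" using internal_direct_sumD(3)[OF ids] by blast
  then have "\<exists>q\<in>Ns s. - q + x \<in> gen_add (\<Union>t\<in>-{s}. Ns t)"
    using gen_add_UN_split[of Ns s x UNIV] internal_direct_sumD(1,2)[OF ids]
    by (simp add: Compl_eq_Diff_UNIV)
  then have "\<exists>!q. q \<in> Ns s \<and> - q + x \<in> gen_add (\<Union>t\<in>-{s}. Ns t)"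
    using homogeneous_component_unique[OF ids] by blast
  then have "homogeneous_component Ns s x \<in> Ns s \<and>
      - homogeneous_component Ns s x + x \<in> gen_add (\<Union>t\<in>-{s}. Ns t)"
    unfolding homogeneous_component_def by (rule theI')
  then show "homogeneous_component Ns s x \<in> Ns s"
    and "- homogeneous_component Ns s x + x \<in> gen_add (\<Union>t\<in>-{s}. Ns t)" by blast+
qed

lemma homogeneous_component_eqI:
  assumes "internal_direct_sum Ns"
    and "q \<in> Ns s" "- q + x \<in> gen_add (\<Union>t\<in>-{s}. Ns t)"
  shows "homogeneous_component Ns s x = q"
  using homogeneous_component_unique[OF assms(1) homogeneous_component[OF assms(1)] assms(2,3)] .

lemma homogeneous_component_minus_other:
  assumes ids: "internal_direct_sum Ns"
    and "q \<in> Ns s" "s \<noteq> s'"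
  shows "homogeneous_component Ns s' (- q + x) = homogeneous_component Ns s' x"
proof (rule homogeneous_component_eqI[OF ids])
  let ?p = "homogeneous_component Ns s' x"
  show "?p \<in> Ns s'" using homogeneous_component(1)[OF ids] .
  have "- q \<in> Ns s" using assms(2) internal_direct_sumD(1)[OF ids] unfolding add_subgroup_def by blast
  then have "- ?p + - q - - ?p \<in> gen_add (\<Union>t\<in>-{s'}. Ns t)"
    using assms(3) internal_direct_sumD(2)[OF ids] by (blast intro: gen_add.gen_base)
  moreover have "- ?p + (- q + x) = (- ?p + - q - - ?p) + (- ?p + x)"
    by (simp only: diff_conv_add_uminus add.assoc minus_add minus_minus add_minus_cancel
        minus_add_cancel)
  ultimately show "- ?p + (- q + x) \<in> gen_add (\<Union>t\<in>-{s'}. Ns t)"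
    using homogeneous_component(2)[OF ids] by (metis gen_add.gen_plus)
qed

lemma homogeneous_component_mem_graded:
  assumes ids: "internal_direct_sum Ns"
    and graded: "Q = gen_add (\<Union>t. Q \<inter> Ns t)" and "x \<in> Q"
  shows "homogeneous_component Ns s x \<in> Q"
proof -
  have Q: "add_subgroup Q" using graded add_subgroup_gen_add by metis
  have "\<exists>q\<in>Q \<inter> Ns s. - q + x \<in> gen_add (\<Union>t\<in>UNIV - {s}. Q \<inter> Ns t)"
  proof (rule gen_add_UN_split)
    show "add_subgroup (Q \<inter> Ns s)" using add_subgroup_Int[OF Q internal_direct_sumD(1)[OF ids]] .
    show "q + r - q \<in> Q \<inter> Ns t" if "q \<in> Q \<inter> Ns s" "r \<in> Q \<inter> Ns t" for q t r
      using that Q internal_direct_sumD(2)[OF ids] unfolding add_subgroup_def diff_conv_add_uminus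
      by blast
    show "x \<in> gen_add (\<Union>t\<in>UNIV. Q \<inter> Ns t)" using \<open>x \<in> Q\<close> graded by blast
  qed
  then obtain q where q: "q \<in> Q \<inter> Ns s" "- q + x \<in> gen_add (\<Union>t\<in>UNIV - {s}. Q \<inter> Ns t)" ..
  moreover have "gen_add (\<Union>t\<in>UNIV - {s}. Q \<inter> Ns t) \<subseteq> gen_add (\<Union>t\<in>-{s}. Ns t)"
    by (intro gen_add_mono) auto
  ultimately have "homogeneous_component Ns s x = q"
    using homogeneous_component_eqI[OF ids] by blast
  with q show ?thesis by blast
qed

lemma mem_gen_add_homogeneous_components:
  assumes ids: "internal_direct_sum Ns" and "finite S"
  shows "x \<in> gen_add (\<Union>t\<in>S. Ns t) \<Longrightarrow> (\<And>s. s \<in> S \<Longrightarrow> homogeneous_component Ns s x \<in> Q) \<Longrightarrow>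
    x \<in> gen_add (\<Union>t\<in>S. Q \<inter> Ns t)"
  using \<open>finite S\<close>
proof (induction S arbitrary: x rule: finite_induct)
  case empty
  then show ?case by (simp add: gen_add_empty)
next
  case (insert s S x)
  define q where "q = homogeneous_component Ns s x"
  define r where "r = - q + x"
  obtain q' where q': "q' \<in> Ns s" "- q' + x \<in> gen_add (\<Union>t\<in>insert s S - {s}. Ns t)"
    using gen_add_UN_split[of Ns s x "insert s S"] internal_direct_sumD(1,2)[OF ids] insert.prems(1)
    by blast
  have "insert s S - {s} = S" using insert.hyps(2) by blast
  with q' have rest: "- q' + x \<in> gen_add (\<Union>t\<in>S. Ns t)" by simp
  moreover have "gen_add (\<Union>t\<in>S. Ns t) \<subseteq> gen_add (\<Union>t\<in>-{s}. Ns t)"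
    using insert.hyps(2) by (intro gen_add_mono) auto
  ultimately have "q = q'"
    unfolding q_def using homogeneous_component_eqI[OF ids q'(1)] by blast
  with rest have "r \<in> gen_add (\<Union>t\<in>S. Ns t)" unfolding r_def by simp
  moreover have "homogeneous_component Ns s' r \<in> Q" if "s' \<in> S" for s'
  proof -
    have "s \<noteq> s'" using that insert.hyps(2) by blast
    then have "homogeneous_component Ns s' r = homogeneous_component Ns s' x"
      unfolding r_def q_def
      by (rule homogeneous_component_minus_other[OF ids homogeneous_component(1)[OF ids]])
    then show ?thesis using that insert.prems(2) by simp
  qed
  ultimately have "r \<in> gen_add (\<Union>t\<in>S. Q \<inter> Ns t)" by (rule insert.IH)
  also have "\<dots> \<subseteq> gen_add (\<Union>t\<in>insert s S. Q \<inter> Ns t)" by (intro gen_add_mono) auto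
  finally have "r \<in> gen_add (\<Union>t\<in>insert s S. Q \<inter> Ns t)" .
  moreover have "q \<in> gen_add (\<Union>t\<in>insert s S. Q \<inter> Ns t)"
    using insert.prems(2) homogeneous_component(1)[OF ids] unfolding q_def
    by (blast intro: gen_add.gen_base)
  moreover have "x = q + r" unfolding r_def by (simp only: add_minus_cancel)
  ultimately show ?case by (metis gen_add.gen_plus)
qed

lemma graded_iff_homogeneous_components_closed:
  assumes ids: "internal_direct_sum Ns" and Q: "add_subgroup Q"
  shows "Q = gen_add (\<Union>s. Q \<inter> Ns s) \<longleftrightarrow> (\<forall>x\<in>Q. \<forall>s. homogeneous_component Ns s x \<in> Q)"
proof
  assume "Q = gen_add (\<Union>s. Q \<inter> Ns s)"
  then show "\<forall>x\<in>Q. \<forall>s. homogeneous_component Ns s x \<in> Q"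
    by (blast intro: homogeneous_component_mem_graded[OF ids])
next
  assume closed: "\<forall>x\<in>Q. \<forall>s. homogeneous_component Ns s x \<in> Q"
  have "x \<in> gen_add (\<Union>s. Q \<inter> Ns s)" if "x \<in> Q" for x
  proof -
    have "x \<in> gen_add (\<Union>s. Ns s)" using internal_direct_sumD(3)[OF ids] by blast
    then obtain S where S: "finite S" "x \<in> gen_add (\<Union>s\<in>S. Ns s)"
      by (rule gen_add_UN_finite_subfamily)
    have "x \<in> gen_add (\<Union>s\<in>S. Q \<inter> Ns s)"
      using closed \<open>x \<in> Q\<close> by (intro mem_gen_add_homogeneous_components[OF ids S]) blast
    also have "\<dots> \<subseteq> gen_add (\<Union>s. Q \<inter> Ns s)" by (intro gen_add_mono) blast
    finally show ?thesis .
  qed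
  moreover have "gen_add (\<Union>s. Q \<inter> Ns s) \<subseteq> Q" by (rule gen_add_least[OF Q]) blast
  ultimately show "Q = gen_add (\<Union>s. Q \<inter> Ns s)" by blast
qed

lemma nr_ideal_INT: "(\<And>a. a \<in> A \<Longrightarrow> nr_ideal (P a)) \<Longrightarrow> nr_ideal (\<Inter>a\<in>A. P a)"
  unfolding nr_ideal_def normal_add_subgroup_def add_subgroup_def by auto

lemma graded_ideal_iff_homogeneous_components_closed:
  assumes "internal_direct_sum Ns"
  shows "graded_ideal Ns Q \<longleftrightarrow>
    nr_ideal Q \<and> (\<forall>x\<in>Q. \<forall>s. homogeneous_component Ns s x \<in> Q)"
  unfolding graded_ideal_def nr_ideal_def normal_add_subgroup_def
  using graded_iff_homogeneous_components_closed[OF assms] by blast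

lemma graded_ideal_INT:
  assumes "internal_direct_sum Ns" and "\<And>a. a \<in> A \<Longrightarrow> graded_ideal Ns (P a)"
  shows "graded_ideal Ns (\<Inter>a\<in>A. P a)"
  using assms(2) nr_ideal_INT[of A P]
  unfolding graded_ideal_iff_homogeneous_components_closed[OF assms(1)] by blast

lemma INT_chain_subset_disj:
  fixes P :: "'a::linorder \<Rightarrow> 'b set"
  assumes mono: "\<And>a b. a \<in> A \<Longrightarrow> b \<in> A \<Longrightarrow> a \<le> b \<Longrightarrow> P a \<subseteq> P b"
    and disj: "\<And>a. a \<in> A \<Longrightarrow> I \<subseteq> P a \<or> J \<subseteq> P a"
  shows "I \<subseteq> (\<Inter>a\<in>A. P a) \<or> J \<subseteq> (\<Inter>a\<in>A. P a)"
proof (rule ccontr)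
  assume "\<not> ?thesis"
  then obtain a b where a: "a \<in> A" "\<not> I \<subseteq> P a" and b: "b \<in> A" "\<not> J \<subseteq> P b" by blast
  have "min a b \<in> A" using a b by (simp add: min_def)
  moreover have "P (min a b) \<subseteq> P a" "P (min a b) \<subseteq> P b"
    using mono a b \<open>min a b \<in> A\<close> by simp_all
  ultimately show False using disj a b by blast
qed

theorem proposition3:
  fixes Ns :: "'g::monoid_mult \<Rightarrow> 'n::{group_add, semigroup_mult} set"
    and A :: "'a::linorder set"
    and P :: "'a \<Rightarrow> 'n set"
  assumes "graded_near_ring Ns"
    and "\<And>a. a \<in> A \<Longrightarrow> graded_weakly_prime Ns (P a)"
    and "\<And>a b. a \<in> A \<Longrightarrow> b \<in> A \<Longrightarrow> a \<le> b \<Longrightarrow> P a \<subseteq> P b"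
  shows "graded_weakly_prime Ns (\<Inter>a\<in>A. P a)"
proof -
  have "internal_direct_sum Ns" using assms(1) unfolding graded_near_ring_def by blast
  moreover have "graded_ideal Ns (P a)" if "a \<in> A" for a
    using assms(2)[OF that] unfolding graded_weakly_prime_def by blast
  ultimately have "graded_ideal Ns (\<Inter>a\<in>A. P a)" by (rule graded_ideal_INT)
  moreover have "I \<subseteq> (\<Inter>a\<in>A. P a) \<or> J \<subseteq> (\<Inter>a\<in>A. P a)"
    if "graded_ideal Ns I" "graded_ideal Ns J" "ideal_prod I J \<noteq> {0}"
      and "ideal_prod I J \<subseteq> (\<Inter>a\<in>A. P a)" for I J
    using assms(3)
  proof (rule INT_chain_subset_disj)
    fix a assume "a \<in> A"
    then show "I \<subseteq> P a \<or> J \<subseteq> P a"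
      using assms(2) that unfolding graded_weakly_prime_def by blast
  qed
  ultimately show ?thesis unfolding graded_weakly_prime_def by blast
qed

end
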